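(* Let $\pi^{\mathrm{cen},*}\in S^{\mathrm{cen}}$. (a) For any $\varepsilon\ge0$, any optimizer $(\pi^*_1,\dots,\pi^*_N,\pi^*_c)$ of the CAL problem with parameter $\varepsilon$, and any $i$, $V_{N^{-1}\mathbf{1}}(\pi^{\mathrm{cen},*})\le V_{N^{-1}\mathbf{1}}(\pi^*_i)$. (b) For any $j\in\{1,\dots,N\}$ and $\pi^{\mathrm{dec},*}_j\in S^{\mathrm{dec}}_j$, if $V_{N^{-1}\mathbf{1}}(\pi^{\mathrm{cen},*})<V_{N^{-1}\mathbf{1}}(\pi^{\mathrm{dec},*}_j)$, then there exists $\varepsilon>0$ such that $V_{N^{-1}\mathbf{1}}(\pi^*_j)\le V_{N^{-1}\mathbf{1}}(\pi^{\mathrm{dec},*}_j)$ for every optimizer $(\pi^*_1,\dots,\pi^*_N,\pi^*_c)$ of the CAL problem with parameter $\varepsilon$.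
   Context: Let $\mathcal{S},\mathcal{A}$ be finite sets, $\gamma\in(0,1)$, $\rho$ a probability distribution on $\mathcal{S}$, and for $i=1,\dots,N$ environment $i$ is the Markov decision process $(\mathcal{S},\mathcal{A},P^i,\gamma,\rho)$. $\Pi$ is the set of stationary policies $\pi:\mathcal{S}\to\Delta(\mathcal{A})$ ($\pi(s,a)$ = probability of $a$ at $s$). $\mu^\pi_i(s,a)=\sum_{t\ge0}\gamma^t\mathbb{P}^{\pi,i}_\rho[s_t=s,a_t=a]$ is the discounted occupation measure (trajectory law: $s_0\sim\rho$, $a_t\sim\pi(s_t,\cdot)$, $s_{t+1}\sim P^i(\cdot\mid s_t,a_t)$). Expert policies $\pi^{E_i}\in\Pi$ and a cost basis matrix $\Phi\in\mathbb{R}^{|\mathcal{S}||\mathcal{A}|\times n_c}$ with columns of sup-norm at most $1$ are given. For $\beta$ in the probability simplex of $\mathbb{R}^N$, $V_\beta(\pi)=\sum_{i=1}^N\beta_i\|\Phi^\top\mu^\pi_i-\Phi^\top\mu^{\pi^{E_i}}_i\|_1$; $N^{-1}\mathbf{1}$ is the vector with all entries $1/N$. $S^{\mathrm{dec}}_j=\arg\min_{\pi\in\Pi}\|\Phi^\top\mu^\pi_j-\Phi^\top\mu^{\pi^{E_j}}_j\|_1$ and $S^{\mathrm{cen}}=\arg\min_{\pi\in\Pi}\sum_{i=1}^N\|\Phi^\top\mu^\pi_i-\Phi^\top\mu^{\pi^{E_i}}_i\|_1$. The CAL problem with parameter $\varepsilon\ge0$ is: minimize $\sum_{i=1}^N\|\Phi^\top\mu^{\pi_i}_i-\Phi^\top\mu^{\pi^{E_i}}_i\|_1$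 over $(\pi_1,\dots,\pi_N,\pi_c)\in\Pi^{N+1}$ subject to $\max_{(s,a)}|\pi_i(s,a)-\pi_c(s,a)|\le\varepsilon$ for all $i$. *)

theory Defs
  imports "HOL-Analysis.Analysis"
begin

text \<open>Environments are indexed by i in {1..N}; P i s a s' is the transition probability.\<close>

definition policies :: "('s::finite \<Rightarrow> 'a::finite \<Rightarrow> real) set" where
  "policies = {\<pi>. (\<forall>s a. 0 \<le> \<pi> s a) \<and> (\<forall>s. (\<Sum>a\<in>UNIV. \<pi> s a) = 1)}"

text \<open>Marginal law of s_t under policy pi in an MDP with kernel P and initial distribution rho:
  P[s_t = s]. Then P[s_t = s, a_t = a] = state_dist t s * pi s a.\<close>
fun state_dist :: "('s::finite \<Rightarrow> 'a::finite \<Rightarrow> 's \<Rightarrow> real) \<Rightarrow> ('s \<Rightarrow> real)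
      \<Rightarrow> ('s \<Rightarrow> 'a \<Rightarrow> real) \<Rightarrow> nat \<Rightarrow> 's \<Rightarrow> real" where
  "state_dist P \<rho> \<pi> 0 s = \<rho> s"
| "state_dist P \<rho> \<pi> (Suc t) s' =
     (\<Sum>s\<in>UNIV. \<Sum>a\<in>UNIV. state_dist P \<rho> \<pi> t s * \<pi> s a * P s a s')"

definition occ :: "real \<Rightarrow> ('s::finite \<Rightarrow> 'a::finite \<Rightarrow> 's \<Rightarrow> real) \<Rightarrow> ('s \<Rightarrow> real)
      \<Rightarrow> ('s \<Rightarrow> 'a \<Rightarrow> real) \<Rightarrow> 's \<times> 'a \<Rightarrow> real" where
  "occ \<gamma> P \<rho> \<pi> sa = (\<Sum>t. \<gamma> ^ t * (state_dist P \<rho> \<pi> t (fst sa) * \<pi> (fst sa) (snd sa)))"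

definition mismatch :: "('s::finite \<times> 'a::finite \<Rightarrow> 'c::finite \<Rightarrow> real) \<Rightarrow> real
      \<Rightarrow> ('s \<Rightarrow> 'a \<Rightarrow> 's \<Rightarrow> real) \<Rightarrow> ('s \<Rightarrow> real)
      \<Rightarrow> ('s \<Rightarrow> 'a \<Rightarrow> real) \<Rightarrow> ('s \<Rightarrow> 'a \<Rightarrow> real) \<Rightarrow> real" where
  "mismatch \<Phi> \<gamma> P \<rho> \<pi>E \<pi> =
     (\<Sum>k\<in>UNIV. \<bar>(\<Sum>sa\<in>UNIV. \<Phi> sa k * occ \<gamma> P \<rho> \<pi> sa)
                 - (\<Sum>sa\<in>UNIV. \<Phi> sa k * occ \<gamma> P \<rho> \<pi>E sa)\<bar>)"

definition V :: "nat \<Rightarrow> (nat \<Rightarrow> real) \<Rightarrow> ('s::finite \<times> 'a::finite \<Rightarrow> 'c::finite \<Rightarrow> real) \<Rightarrow> real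
      \<Rightarrow> (nat \<Rightarrow> 's \<Rightarrow> 'a \<Rightarrow> 's \<Rightarrow> real) \<Rightarrow> ('s \<Rightarrow> real)
      \<Rightarrow> (nat \<Rightarrow> 's \<Rightarrow> 'a \<Rightarrow> real) \<Rightarrow> ('s \<Rightarrow> 'a \<Rightarrow> real) \<Rightarrow> real" where
  "V N \<beta> \<Phi> \<gamma> P \<rho> \<pi>E \<pi> = (\<Sum>i=1..N. \<beta> i * mismatch \<Phi> \<gamma> (P i) \<rho> (\<pi>E i) \<pi>)"

definition S_dec :: "('s::finite \<times> 'a::finite \<Rightarrow> 'c::finite \<Rightarrow> real) \<Rightarrow> real
      \<Rightarrow> (nat \<Rightarrow> 's \<Rightarrow> 'a \<Rightarrow> 's \<Rightarrow> real) \<Rightarrow> ('s \<Rightarrow> real)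
      \<Rightarrow> (nat \<Rightarrow> 's \<Rightarrow> 'a \<Rightarrow> real) \<Rightarrow> nat \<Rightarrow> ('s \<Rightarrow> 'a \<Rightarrow> real) set" where
  "S_dec \<Phi> \<gamma> P \<rho> \<pi>E j = {\<pi> \<in> policies. \<forall>\<pi>' \<in> policies.
      mismatch \<Phi> \<gamma> (P j) \<rho> (\<pi>E j) \<pi> \<le> mismatch \<Phi> \<gamma> (P j) \<rho> (\<pi>E j) \<pi>'}"

definition S_cen :: "nat \<Rightarrow> ('s::finite \<times> 'a::finite \<Rightarrow> 'c::finite \<Rightarrow> real) \<Rightarrow> real
      \<Rightarrow> (nat \<Rightarrow> 's \<Rightarrow> 'a \<Rightarrow> 's \<Rightarrow> real) \<Rightarrow> ('s \<Rightarrow> real)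
      \<Rightarrow> (nat \<Rightarrow> 's \<Rightarrow> 'a \<Rightarrow> real) \<Rightarrow> ('s \<Rightarrow> 'a \<Rightarrow> real) set" where
  "S_cen N \<Phi> \<gamma> P \<rho> \<pi>E = {\<pi> \<in> policies. \<forall>\<pi>' \<in> policies.
      (\<Sum>i=1..N. mismatch \<Phi> \<gamma> (P i) \<rho> (\<pi>E i) \<pi>) \<le> (\<Sum>i=1..N. mismatch \<Phi> \<gamma> (P i) \<rho> (\<pi>E i) \<pi>')}"

text \<open>Feasible points of the CAL problem: (pi_1..pi_N) given as a function on {1..N}
  (values outside {1..N} are irrelevant), plus the central policy pi_c.\<close>
definition CAL_feasible :: "nat \<Rightarrow> real \<Rightarrow> (nat \<Rightarrow> 's::finite \<Rightarrow> 'a::finite \<Rightarrow> real)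
      \<Rightarrow> ('s \<Rightarrow> 'a \<Rightarrow> real) \<Rightarrow> bool" where
  "CAL_feasible N \<epsilon> \<pi>s \<pi>c \<longleftrightarrow> (\<forall>i\<in>{1..N}. \<pi>s i \<in> policies) \<and> \<pi>c \<in> policies \<and>
      (\<forall>i\<in>{1..N}. \<forall>s a. \<bar>\<pi>s i s a - \<pi>c s a\<bar> \<le> \<epsilon>)"

definition CAL_objective :: "nat \<Rightarrow> ('s::finite \<times> 'a::finite \<Rightarrow> 'c::finite \<Rightarrow> real) \<Rightarrow> real
      \<Rightarrow> (nat \<Rightarrow> 's \<Rightarrow> 'a \<Rightarrow> 's \<Rightarrow> real) \<Rightarrow> ('s \<Rightarrow> real)
      \<Rightarrow> (nat \<Rightarrow> 's \<Rightarrow> 'a \<Rightarrow> real) \<Rightarrow> (nat \<Rightarrow> 's \<Rightarrow> 'a \<Rightarrow> real) \<Rightarrow> real" where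
  "CAL_objective N \<Phi> \<gamma> P \<rho> \<pi>E \<pi>s = (\<Sum>i=1..N. mismatch \<Phi> \<gamma> (P i) \<rho> (\<pi>E i) (\<pi>s i))"

definition CAL_optimizer :: "nat \<Rightarrow> ('s::finite \<times> 'a::finite \<Rightarrow> 'c::finite \<Rightarrow> real) \<Rightarrow> real
      \<Rightarrow> (nat \<Rightarrow> 's \<Rightarrow> 'a \<Rightarrow> 's \<Rightarrow> real) \<Rightarrow> ('s \<Rightarrow> real)
      \<Rightarrow> (nat \<Rightarrow> 's \<Rightarrow> 'a \<Rightarrow> real) \<Rightarrow> real
      \<Rightarrow> (nat \<Rightarrow> 's \<Rightarrow> 'a \<Rightarrow> real) \<Rightarrow> ('s \<Rightarrow> 'a \<Rightarrow> real) \<Rightarrow> bool" where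
  "CAL_optimizer N \<Phi> \<gamma> P \<rho> \<pi>E \<epsilon> \<pi>s \<pi>c \<longleftrightarrow> CAL_feasible N \<epsilon> \<pi>s \<pi>c \<and>
     (\<forall>\<pi>s' \<pi>c'. CAL_feasible N \<epsilon> \<pi>s' \<pi>c' \<longrightarrow>
        CAL_objective N \<Phi> \<gamma> P \<rho> \<pi>E \<pi>s \<le> CAL_objective N \<Phi> \<gamma> P \<rho> \<pi>E \<pi>s')"

end

theory Submission
  imports Defs
begin

(* Part (a): every local policy of a CAL optimizer is a policy, and pi_cen minimizes the
   averaged mismatch over all policies.
   Part (b): the transition kernel is an l1 contraction, so policies at sup distance delta have
   time-t state distributions at l1 distance at most t |A| delta; hence their occupation measures
   differ by at most (|A| + 1) delta / (1 - gamma)^2 pointwise, and every mismatch is Lipschitz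
   in the policy with some constant L.  In a CAL optimizer with parameter eps the local policies
   are pairwise within 2 eps, and (pi_cen, ..., pi_cen; pi_cen) is feasible, so
   V(pi_j) <= V(pi_cen) + 2 L eps; choose 2 L eps below the gap V(pi_dec) - V(pi_cen). *)

lemma sum_swap3:
  "(\<Sum>x\<in>A. \<Sum>y\<in>B. \<Sum>z\<in>C. f x y z) = (\<Sum>y\<in>B. \<Sum>z\<in>C. \<Sum>x\<in>A. f x y z)"
  by (subst sum.swap) (rule sum.cong[OF refl sum.swap])

lemma abs_mult_diff_le:
  fixes x y p q \<delta> :: real
  assumes "0 \<le> p" "0 \<le> y" "\<bar>p - q\<bar> \<le> \<delta>"
  shows "\<bar>x * p - y * q\<bar> \<le> \<bar>x - y\<bar> * p + y * \<delta>"
proof -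
  have "\<bar>x * p - y * q\<bar> = \<bar>(x - y) * p + y * (p - q)\<bar>"
    by (simp add: algebra_simps)
  also have "\<dots> \<le> \<bar>x - y\<bar> * p + y * \<bar>p - q\<bar>"
    using abs_triangle_ineq[of "(x - y) * p" "y * (p - q)"] assms by (simp add: abs_mult)
  also have "\<dots> \<le> \<bar>x - y\<bar> * p + y * \<delta>"
    using assms by (simp add: mult_left_mono)
  finally show ?thesis .
qed

lemma policy_nonneg: "\<pi> \<in> policies \<Longrightarrow> 0 \<le> \<pi> s a"
  by (simp add: policies_def)

lemma policy_sum: "\<pi> \<in> policies \<Longrightarrow> (\<Sum>a\<in>UNIV. \<pi> s a) = 1"
  by (simp add: policies_def)

lemma policy_le_one: "\<pi> \<in> policies \<Longrightarrow> \<pi> s a \<le> 1"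
  using member_le_sum[of a UNIV "\<pi> s"] by (simp add: policies_def)

locale finite_mdp =
  fixes P :: "'s::finite \<Rightarrow> 'a::finite \<Rightarrow> 's \<Rightarrow> real" and \<rho> :: "'s \<Rightarrow> real"
  assumes P_nonneg: "0 \<le> P s a s'"
    and P_sum: "(\<Sum>s'\<in>UNIV. P s a s') = 1"
    and rho_nonneg: "0 \<le> \<rho> s"
    and rho_sum: "(\<Sum>s\<in>UNIV. \<rho> s) = 1"
begin

lemma state_dist_nonneg: "\<pi> \<in> policies \<Longrightarrow> 0 \<le> state_dist P \<rho> \<pi> t s"
  by (induction t arbitrary: s)
    (auto simp: rho_nonneg P_nonneg policy_nonneg intro!: sum_nonneg)

lemma state_dist_sum:
  assumes "\<pi> \<in> policies"
  shows "(\<Sum>s\<in>UNIV. state_dist P \<rho> \<pi> t s) = 1"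
proof (induction t)
  case 0
  show ?case by (simp add: rho_sum)
next
  case (Suc t)
  have "(\<Sum>s'\<in>UNIV. state_dist P \<rho> \<pi> (Suc t) s')
      = (\<Sum>s\<in>UNIV. \<Sum>a\<in>UNIV. state_dist P \<rho> \<pi> t s * \<pi> s a * (\<Sum>s'\<in>UNIV. P s a s'))"
    by (subst state_dist.simps, subst sum_swap3) (simp add: sum_distrib_left)
  also have "\<dots> = (\<Sum>s\<in>UNIV. state_dist P \<rho> \<pi> t s * (\<Sum>a\<in>UNIV. \<pi> s a))"
    by (simp add: P_sum sum_distrib_left)
  also have "\<dots> = 1"
    using Suc assms by (simp add: policy_sum)
  finally show ?case .
qed

lemma state_dist_le_one:
  assumes "\<pi> \<in> policies"
  shows "state_dist P \<rho> \<pi> t s \<le> 1"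
  using member_le_sum[of s UNIV "state_dist P \<rho> \<pi> t"] state_dist_nonneg state_dist_sum assms
  by simp

lemma kernel_l1_contraction:
  "(\<Sum>s'\<in>UNIV. \<bar>\<Sum>s\<in>UNIV. \<Sum>a\<in>UNIV. m s a * P s a s'\<bar>) \<le> (\<Sum>s\<in>UNIV. \<Sum>a\<in>UNIV. \<bar>m s a\<bar>)"
proof -
  have "(\<Sum>s'\<in>UNIV. \<bar>\<Sum>s\<in>UNIV. \<Sum>a\<in>UNIV. m s a * P s a s'\<bar>)
      \<le> (\<Sum>s'\<in>UNIV. \<Sum>s\<in>UNIV. \<Sum>a\<in>UNIV. \<bar>m s a\<bar> * P s a s')"
    by (intro sum_mono order.trans[OF sum_abs]) (simp add: abs_mult P_nonneg)
  also have "\<dots> = (\<Sum>s\<in>UNIV. \<Sum>a\<in>UNIV. \<bar>m s a\<bar> * (\<Sum>s'\<in>UNIV. P s a s'))"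
    by (subst sum_swap3) (simp add: sum_distrib_left)
  finally show ?thesis
    by (simp add: P_sum)
qed

lemma state_dist_l1_dist:
  assumes \<pi>: "\<pi> \<in> policies" and \<pi>': "\<pi>' \<in> policies"
    and close: "\<forall>s a. \<bar>\<pi> s a - \<pi>' s a\<bar> \<le> \<delta>"
  shows "(\<Sum>s\<in>UNIV. \<bar>state_dist P \<rho> \<pi> t s - state_dist P \<rho> \<pi>' t s\<bar>) \<le> real t * CARD('a) * \<delta>"
proof (induction t)
  case 0
  show ?case by simp
next
  case (Suc t)
  let ?d = "state_dist P \<rho> \<pi> t" and ?d' = "state_dist P \<rho> \<pi>' t"
  have "(\<Sum>s'\<in>UNIV. \<bar>state_dist P \<rho> \<pi> (Suc t) s' - state_dist P \<rho> \<pi>' (Suc t) s'\<bar>)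
      = (\<Sum>s'\<in>UNIV. \<bar>\<Sum>s\<in>UNIV. \<Sum>a\<in>UNIV. (?d s * \<pi> s a - ?d' s * \<pi>' s a) * P s a s'\<bar>)"
    by (simp add: sum_subtractf[symmetric] left_diff_distrib)
  also have "\<dots> \<le> (\<Sum>s\<in>UNIV. \<Sum>a\<in>UNIV. \<bar>?d s * \<pi> s a - ?d' s * \<pi>' s a\<bar>)"
    by (rule kernel_l1_contraction)
  also have "\<dots> \<le> (\<Sum>s\<in>UNIV. \<Sum>a\<in>UNIV. \<bar>?d s - ?d' s\<bar> * \<pi> s a + ?d' s * \<delta>)"
    using close by (intro sum_mono abs_mult_diff_le) (simp_all add: policy_nonneg state_dist_nonneg \<pi> \<pi>')
  also have "\<dots> = (\<Sum>s\<in>UNIV. \<bar>?d s - ?d' s\<bar>) + CARD('a) * \<delta> * (\<Sum>s\<in>UNIV. ?d' s)"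
  proof -
    have "(\<Sum>a\<in>UNIV. \<bar>?d s - ?d' s\<bar> * \<pi> s a) = \<bar>?d s - ?d' s\<bar>" for s
      using policy_sum[OF \<pi>] by (simp flip: sum_distrib_left)
    then show ?thesis
      by (simp add: sum.distrib sum_distrib_left mult_ac)
  qed
  also have "\<dots> \<le> real t * CARD('a) * \<delta> + CARD('a) * \<delta>"
    using Suc state_dist_sum[OF \<pi>'] by simp
  finally show ?case
    by (simp add: algebra_simps)
qed

lemma state_action_dist:
  assumes \<pi>: "\<pi> \<in> policies" and \<pi>': "\<pi>' \<in> policies"
    and close: "\<forall>s a. \<bar>\<pi> s a - \<pi>' s a\<bar> \<le> \<delta>"
  shows "\<bar>state_dist P \<rho> \<pi> t s * \<pi> s a - state_dist P \<rho> \<pi>' t s * \<pi>' s a\<bar>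
    \<le> (real t * CARD('a) + 1) * \<delta>"
proof -
  let ?d = "state_dist P \<rho> \<pi> t" and ?d' = "state_dist P \<rho> \<pi>' t"
  have "\<bar>?d s - ?d' s\<bar> \<le> real t * CARD('a) * \<delta>"
    using member_le_sum[of s UNIV "\<lambda>s. \<bar>?d s - ?d' s\<bar>"] state_dist_l1_dist[OF assms, of t]
    by simp
  moreover have "\<bar>?d s * \<pi> s a - ?d' s * \<pi>' s a\<bar> \<le> \<bar>?d s - ?d' s\<bar> * \<pi> s a + ?d' s * \<delta>"
    using close by (intro abs_mult_diff_le) (simp_all add: policy_nonneg state_dist_nonneg \<pi> \<pi>')
  moreover have "\<bar>?d s - ?d' s\<bar> * \<pi> s a \<le> \<bar>?d s - ?d' s\<bar>"
    using policy_le_one[OF \<pi>] by (simp add: mult_left_le)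
  moreover have "?d' s * \<delta> \<le> \<delta>"
    using close state_dist_le_one[OF \<pi>'] state_dist_nonneg[OF \<pi>']
    by (metis abs_ge_zero mult_left_le_one_le order_trans)
  ultimately show ?thesis
    by (simp add: algebra_simps)
qed

lemma occ_summable:
  assumes \<pi>: "\<pi> \<in> policies" and \<gamma>: "0 \<le> \<gamma>" "\<gamma> < 1"
  shows "summable (\<lambda>t. \<gamma> ^ t * (state_dist P \<rho> \<pi> t s * \<pi> s a))"
proof (rule summable_comparison_test'[OF summable_geometric[of \<gamma>]])
  show "norm \<gamma> < 1"
    using \<gamma> by simp
  fix t
  have "state_dist P \<rho> \<pi> t s * \<pi> s a \<le> 1"
    using \<pi> by (intro mult_le_one) (simp_all add: state_dist_le_one state_dist_nonneg policy_le_one policy_nonneg)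
  then show "norm (\<gamma> ^ t * (state_dist P \<rho> \<pi> t s * \<pi> s a)) \<le> \<gamma> ^ t"
    using \<pi> \<gamma> by (simp add: abs_mult mult_left_le state_dist_nonneg policy_nonneg)
qed

lemma occ_dist:
  assumes \<pi>: "\<pi> \<in> policies" and \<pi>': "\<pi>' \<in> policies"
    and close: "\<forall>s a. \<bar>\<pi> s a - \<pi>' s a\<bar> \<le> \<delta>"
    and \<gamma>: "0 \<le> \<gamma>" "\<gamma> < 1"
  shows "\<bar>occ \<gamma> P \<rho> \<pi> sa - occ \<gamma> P \<rho> \<pi>' sa\<bar> \<le> (CARD('a) + 1) / (1 - \<gamma>)\<^sup>2 * \<delta>"
proof -
  obtain s a where sa: "sa = (s, a)"
    by fastforce
  have "0 \<le> \<delta>"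
    using close abs_ge_zero order_trans by blast
  let ?k = "\<lambda>t. (CARD('a) + 1) * \<delta> * (real (Suc t) * \<gamma> ^ t)"
  have k_sums: "?k sums ((CARD('a) + 1) * \<delta> * (1 / (1 - \<gamma>)\<^sup>2))"
    using \<gamma> by (intro sums_mult geometric_deriv_sums) simp
  have "occ \<gamma> P \<rho> \<pi> sa - occ \<gamma> P \<rho> \<pi>' sa
      = (\<Sum>t. \<gamma> ^ t * (state_dist P \<rho> \<pi> t s * \<pi> s a - state_dist P \<rho> \<pi>' t s * \<pi>' s a))"
    using suminf_diff[OF occ_summable[OF \<pi> \<gamma>] occ_summable[OF \<pi>' \<gamma>]]
    by (simp add: occ_def sa right_diff_distrib)
  also have "\<bar>\<dots>\<bar> \<le> suminf ?k"
    unfolding real_norm_def[symmetric]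
  proof (rule norm_suminf_le)
    fix t
    have "real t * CARD('a) + 1 \<le> (CARD('a) + 1) * real (Suc t)"
      by (simp add: algebra_simps)
    from mult_right_mono[OF this \<open>0 \<le> \<delta>\<close>]
    have "(real t * CARD('a) + 1) * \<delta> \<le> (CARD('a) + 1) * \<delta> * real (Suc t)"
      by (simp add: mult_ac)
    then have "\<bar>state_dist P \<rho> \<pi> t s * \<pi> s a - state_dist P \<rho> \<pi>' t s * \<pi>' s a\<bar>
        \<le> (CARD('a) + 1) * \<delta> * real (Suc t)"
      using state_action_dist[OF assms(1-3), of t s a] by linarith
    then have "\<gamma> ^ t * \<bar>state_dist P \<rho> \<pi> t s * \<pi> s a - state_dist P \<rho> \<pi>' t s * \<pi>' s a\<bar>
        \<le> \<gamma> ^ t * ((CARD('a) + 1) * \<delta> * real (Suc t))"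
      using \<gamma> by (intro mult_left_mono) simp_all
    then show "norm (\<gamma> ^ t * (state_dist P \<rho> \<pi> t s * \<pi> s a - state_dist P \<rho> \<pi>' t s * \<pi>' s a)) \<le> ?k t"
      using \<gamma> by (simp add: abs_mult mult_ac)
  qed (use k_sums in \<open>rule sums_summable\<close>)
  finally show ?thesis
    using sums_unique[OF k_sums] by simp
qed

lemma mismatch_dist:
  fixes \<Phi> :: "'s \<times> 'a \<Rightarrow> 'c::finite \<Rightarrow> real"
  assumes \<pi>: "\<pi> \<in> policies" and \<pi>': "\<pi>' \<in> policies"
    and close: "\<forall>s a. \<bar>\<pi> s a - \<pi>' s a\<bar> \<le> \<delta>"
    and \<gamma>: "0 \<le> \<gamma>" "\<gamma> < 1"
    and \<Phi>: "\<forall>sa k. \<bar>\<Phi> sa k\<bar> \<le> 1"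
  shows "\<bar>mismatch \<Phi> \<gamma> P \<rho> \<pi>E \<pi> - mismatch \<Phi> \<gamma> P \<rho> \<pi>E \<pi>'\<bar>
    \<le> CARD('c) * CARD('s \<times> 'a) * ((CARD('a) + 1) / (1 - \<gamma>)\<^sup>2 * \<delta>)"
proof -
  let ?C = "(CARD('a) + 1) / (1 - \<gamma>)\<^sup>2 * \<delta>"
  let ?f = "\<lambda>\<pi> k. \<Sum>sa\<in>UNIV. \<Phi> sa k * occ \<gamma> P \<rho> \<pi> sa"
  have feature: "\<bar>?f \<pi> k - ?f \<pi>' k\<bar> \<le> CARD('s \<times> 'a) * ?C" for k
  proof -
    have "\<bar>?f \<pi> k - ?f \<pi>' k\<bar> = \<bar>\<Sum>sa\<in>UNIV. \<Phi> sa k * (occ \<gamma> P \<rho> \<pi> sa - occ \<gamma> P \<rho> \<pi>' sa)\<bar>"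
      by (simp add: sum_subtractf right_diff_distrib)
    also have "\<dots> \<le> (\<Sum>sa\<in>UNIV. \<bar>\<Phi> sa k * (occ \<gamma> P \<rho> \<pi> sa - occ \<gamma> P \<rho> \<pi>' sa)\<bar>)"
      by (rule sum_abs)
    also have "\<dots> \<le> (\<Sum>sa\<in>(UNIV :: ('s \<times> 'a) set). ?C)"
    proof (rule sum_mono)
      fix sa
      show "\<bar>\<Phi> sa k * (occ \<gamma> P \<rho> \<pi> sa - occ \<gamma> P \<rho> \<pi>' sa)\<bar> \<le> ?C"
        using mult_mono[OF \<Phi>[rule_format, of sa k] occ_dist[OF assms(1-5), of sa]]
        by (simp add: abs_mult)
    qed
    finally show ?thesis
      by simp
  qed
  have "\<bar>mismatch \<Phi> \<gamma> P \<rho> \<pi>E \<pi> - mismatch \<Phi> \<gamma> P \<rho> \<pi>E \<pi>'\<bar>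
      = \<bar>\<Sum>k\<in>UNIV. \<bar>?f \<pi> k - ?f \<pi>E k\<bar> - \<bar>?f \<pi>' k - ?f \<pi>E k\<bar>\<bar>"
    by (simp only: mismatch_def sum_subtractf)
  also have "\<dots> \<le> (\<Sum>k\<in>UNIV. \<bar>\<bar>?f \<pi> k - ?f \<pi>E k\<bar> - \<bar>?f \<pi>' k - ?f \<pi>E k\<bar>\<bar>)"
    by (rule sum_abs)
  also have "\<dots> \<le> (\<Sum>k\<in>(UNIV :: 'c set). CARD('s \<times> 'a) * ?C)"
  proof (rule sum_mono)
    fix k
    have "\<bar>\<bar>?f \<pi> k - ?f \<pi>E k\<bar> - \<bar>?f \<pi>' k - ?f \<pi>E k\<bar>\<bar> \<le> \<bar>?f \<pi> k - ?f \<pi>' k\<bar>"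
      using abs_triangle_ineq3[of "?f \<pi> k - ?f \<pi>E k" "?f \<pi>' k - ?f \<pi>E k"] by simp
    then show "\<bar>\<bar>?f \<pi> k - ?f \<pi>E k\<bar> - \<bar>?f \<pi>' k - ?f \<pi>E k\<bar>\<bar> \<le> CARD('s \<times> 'a) * ?C"
      using feature[of k] by linarith
  qed
  finally show ?thesis
    by (simp only: sum_constant of_nat_mult mult.assoc)
qed

end

lemma V_uniform:
  "V N (\<lambda>_. 1 / real N) \<Phi> \<gamma> P \<rho> \<pi>E \<pi> = (\<Sum>i=1..N. mismatch \<Phi> \<gamma> (P i) \<rho> (\<pi>E i) \<pi>) / real N"
  unfolding V_def by (simp add: sum_divide_distrib)

lemma S_cen_V_uniform_le:
  assumes "\<pi>cen \<in> S_cen N \<Phi> \<gamma> P \<rho> \<pi>E" and "\<pi> \<in> policies"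
  shows "V N (\<lambda>_. 1 / real N) \<Phi> \<gamma> P \<rho> \<pi>E \<pi>cen \<le> V N (\<lambda>_. 1 / real N) \<Phi> \<gamma> P \<rho> \<pi>E \<pi>"
  using assms by (simp add: S_cen_def V_uniform divide_right_mono)

lemma CAL_optimizer_policies:
  "CAL_optimizer N \<Phi> \<gamma> P \<rho> \<pi>E \<epsilon> \<pi>s \<pi>c \<Longrightarrow> i \<in> {1..N} \<Longrightarrow> \<pi>s i \<in> policies"
  by (simp add: CAL_optimizer_def CAL_feasible_def)

lemma CAL_optimizer_V_uniform_le:
  assumes opt: "CAL_optimizer N \<Phi> \<gamma> P \<rho> \<pi>E \<epsilon> \<pi>s \<pi>c"
    and j: "j \<in> {1..N}" and \<pi>: "\<pi> \<in> policies"
    and lipschitz: "\<And>i \<pi>1 \<pi>2 \<delta>. i \<in> {1..N} \<Longrightarrow> \<pi>1 \<in> policies \<Longrightarrow> \<pi>2 \<in> policies \<Longrightarrow>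
      \<forall>s a. \<bar>\<pi>1 s a - \<pi>2 s a\<bar> \<le> \<delta> \<Longrightarrow>
      mismatch \<Phi> \<gamma> (P i) \<rho> (\<pi>E i) \<pi>1 \<le> mismatch \<Phi> \<gamma> (P i) \<rho> (\<pi>E i) \<pi>2 + L * \<delta>"
  shows "V N (\<lambda>_. 1 / real N) \<Phi> \<gamma> P \<rho> \<pi>E (\<pi>s j) \<le> V N (\<lambda>_. 1 / real N) \<Phi> \<gamma> P \<rho> \<pi>E \<pi> + 2 * L * \<epsilon>"
proof -
  let ?m = "\<lambda>i. mismatch \<Phi> \<gamma> (P i) \<rho> (\<pi>E i)"
  have near: "\<bar>\<pi>s i s a - \<pi>c s a\<bar> \<le> \<epsilon>" if "i \<in> {1..N}" for i s a
    using opt that by (simp add: CAL_optimizer_def CAL_feasible_def)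
  have "0 \<le> \<epsilon>"
    using near[OF j] abs_ge_zero order_trans by blast
  then have "CAL_feasible N \<epsilon> (\<lambda>_. \<pi>) \<pi>"
    using \<pi> by (simp add: CAL_feasible_def)
  then have optimal: "(\<Sum>i=1..N. ?m i (\<pi>s i)) \<le> (\<Sum>i=1..N. ?m i \<pi>)"
    using opt unfolding CAL_optimizer_def CAL_objective_def by blast
  have "(\<Sum>i=1..N. ?m i (\<pi>s j)) \<le> (\<Sum>i=1..N. ?m i (\<pi>s i) + L * (2 * \<epsilon>))"
  proof (rule sum_mono)
    fix i assume i: "i \<in> {1..N}"
    have "\<bar>\<pi>s j s a - \<pi>s i s a\<bar> \<le> 2 * \<epsilon>" for s a
      using near[OF j, of s a] near[OF i, of s a] by linarith
    then show "?m i (\<pi>s j) \<le> ?m i (\<pi>s i) + L * (2 * \<epsilon>)"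
      using lipschitz[OF i CAL_optimizer_policies[OF opt j] CAL_optimizer_policies[OF opt i]] by blast
  qed
  also have "\<dots> \<le> (\<Sum>i=1..N. ?m i \<pi>) + real N * (2 * L * \<epsilon>)"
    using optimal by (simp add: sum.distrib mult_ac)
  finally have "(\<Sum>i=1..N. ?m i (\<pi>s j)) / real N \<le> ((\<Sum>i=1..N. ?m i \<pi>) + real N * (2 * L * \<epsilon>)) / real N"
    by (rule divide_right_mono) simp
  moreover have "0 < real N"
    using j by simp
  ultimately show ?thesis
    by (simp add: V_uniform add_divide_distrib)
qed

theorem proposition3:
  fixes N :: nat and \<gamma> :: real
    and \<rho> :: "'s::finite \<Rightarrow> real"
    and P :: "nat \<Rightarrow> 's \<Rightarrow> 'a::finite \<Rightarrow> 's \<Rightarrow> real"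
    and \<pi>E :: "nat \<Rightarrow> 's \<Rightarrow> 'a \<Rightarrow> real"
    and \<Phi> :: "'s \<times> 'a \<Rightarrow> 'c::finite \<Rightarrow> real"
    and \<pi>cen :: "'s \<Rightarrow> 'a \<Rightarrow> real"
  assumes N: "N \<ge> 1"
    and gamma: "0 < \<gamma>" "\<gamma> < 1"
    and rho: "\<forall>s. 0 \<le> \<rho> s" "(\<Sum>s\<in>UNIV. \<rho> s) = 1"
    and P: "\<forall>i\<in>{1..N}. \<forall>s a s'. 0 \<le> P i s a s'"
           "\<forall>i\<in>{1..N}. \<forall>s a. (\<Sum>s'\<in>UNIV. P i s a s') = 1"
    and expert: "\<forall>i\<in>{1..N}. \<pi>E i \<in> policies"
    and Phi: "\<forall>sa k. \<bar>\<Phi> sa k\<bar> \<le> 1"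
    and cen: "\<pi>cen \<in> S_cen N \<Phi> \<gamma> P \<rho> \<pi>E"
  shows
    "(\<forall>\<epsilon>\<ge>0. \<forall>\<pi>s \<pi>c. CAL_optimizer N \<Phi> \<gamma> P \<rho> \<pi>E \<epsilon> \<pi>s \<pi>c \<longrightarrow>
        (\<forall>i\<in>{1..N}. V N (\<lambda>_. 1 / real N) \<Phi> \<gamma> P \<rho> \<pi>E \<pi>cen
                   \<le> V N (\<lambda>_. 1 / real N) \<Phi> \<gamma> P \<rho> \<pi>E (\<pi>s i)))
     \<and>
     (\<forall>j\<in>{1..N}. \<forall>\<pi>dec \<in> S_dec \<Phi> \<gamma> P \<rho> \<pi>E j.
        V N (\<lambda>_. 1 / real N) \<Phi> \<gamma> P \<rho> \<pi>E \<pi>cen < V N (\<lambda>_. 1 / real N) \<Phi> \<gamma> P \<rho> \<pi>E \<pi>dec \<longrightarrow>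
        (\<exists>\<epsilon>>0. \<forall>\<pi>s \<pi>c. CAL_optimizer N \<Phi> \<gamma> P \<rho> \<pi>E \<epsilon> \<pi>s \<pi>c \<longrightarrow>
            V N (\<lambda>_. 1 / real N) \<Phi> \<gamma> P \<rho> \<pi>E (\<pi>s j)
              \<le> V N (\<lambda>_. 1 / real N) \<Phi> \<gamma> P \<rho> \<pi>E \<pi>dec))"
proof -
  let ?V = "V N (\<lambda>_. 1 / real N) \<Phi> \<gamma> P \<rho> \<pi>E"
  define L :: real where "L = CARD('c) * CARD('s \<times> 'a) * ((CARD('a) + 1) / (1 - \<gamma>)\<^sup>2)"
  have "0 \<le> L"
    unfolding L_def by simp
  have lipschitz: "mismatch \<Phi> \<gamma> (P i) \<rho> (\<pi>E i) \<pi>1 \<le> mismatch \<Phi> \<gamma> (P i) \<rho> (\<pi>E i) \<pi>2 + L * \<delta>"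
    if "i \<in> {1..N}" "\<pi>1 \<in> policies" "\<pi>2 \<in> policies" "\<forall>s a. \<bar>\<pi>1 s a - \<pi>2 s a\<bar> \<le> \<delta>"
    for i \<pi>1 \<pi>2 \<delta>
  proof -
    interpret finite_mdp "P i" \<rho>
      using P rho \<open>i \<in> {1..N}\<close> by unfold_locales auto
    show ?thesis
      using mismatch_dist[OF that(2-4) _ _ Phi, of \<gamma> "\<pi>E i"] gamma unfolding L_def by (simp add: abs_le_iff mult_ac)
  qed
  have cen_policy: "\<pi>cen \<in> policies"
    using cen by (simp add: S_cen_def)
  show ?thesis
  proof (intro conjI allI impI ballI)
    fix \<epsilon> :: real and \<pi>s \<pi>c i
    assume "CAL_optimizer N \<Phi> \<gamma> P \<rho> \<pi>E \<epsilon> \<pi>s \<pi>c" and "i \<in> {1..N}"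
    then show "?V \<pi>cen \<le> ?V (\<pi>s i)"
      by (intro S_cen_V_uniform_le[OF cen] CAL_optimizer_policies)
  next
    fix j \<pi>dec
    assume j: "j \<in> {1..N}" and gap: "?V \<pi>cen < ?V \<pi>dec"
    define \<epsilon> where "\<epsilon> = (?V \<pi>dec - ?V \<pi>cen) / (2 * L + 1)"
    have "0 < \<epsilon>"
      using gap \<open>0 \<le> L\<close> by (simp add: \<epsilon>_def)
    moreover have "2 * L * \<epsilon> \<le> ?V \<pi>dec - ?V \<pi>cen"
      using gap \<open>0 \<le> L\<close> by (simp add: \<epsilon>_def field_simps)
    ultimately show "\<exists>\<epsilon>>0. \<forall>\<pi>s \<pi>c. CAL_optimizer N \<Phi> \<gamma> P \<rho> \<pi>E \<epsilon> \<pi>s \<pi>c \<longrightarrow> ?V (\<pi>s j) \<le> ?V \<pi>dec"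
      using CAL_optimizer_V_uniform_le[OF _ j cen_policy lipschitz] by fastforce
  qed
qed

end
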